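(* (a) For every integer $B\ge1$ there is a deterministic exploration algorithm which, knowing only $B$ (and not $n$ or $k$), solves PVG-Exploration of every feasible anonymous PV graph (homogeneous or heterogeneous, with arbitrary routes) whose period satisfies $p\le B$, and in which the agent performs at most $(3k-2)B^2$ moves, where $k$ is the number of carriers. (b) For every integer $B\ge1$ there is a deterministic exploration algorithm which, knowing only $B$ and that the system is homogeneous, solves PVG-Exploration of every feasible anonymous homogeneous PV graph with period $p\le B$, performing at most $(3k-2)B$ moves.
   Context: A PV (periodically varying) system consists of a finite set $S$ of $n$ sites and a set $C$ of $k\le n$ carriers. Each carrier $c$ has a distinct identifier and a route $\pi(c)=\langle x_0,\dots,x_{p(c)-1}\rangle$, a finite sequence of sites (repetitions allowed) of length $p(c)\ge 1$ called its period; $\pi(c)[j]=x_{j \bmod p(c)}$. At each time $t\in\mathbb{N}$ carrier $c$ is at site $\pi(c)[t]$ and moves to $\pi(c)[t+1]$. The PV graph $\vec G_R$ is the directed edge-labelled multigraph on $S$ with edges $(x_i,x_{i+1},i)$, $0\le i<p(c)$, for every carrier. Its period is $p=\max_{c}p(c)$; it is homogeneous if all periods are equal, heterogeneous otherwise. In an anonymous system sites are indistinguishable to the agent. An exploring agent is injected at time $0$ at a site of $\mathrm{start}(\vec G_R)=\{\pi(c)[0]:c\in C\}$. If at time $t$ the agent is at site $x$, it must either choose a carrier $c$ with $\pi(c)[t]=x$ and ride with it to $\pi(c)[t+1]$ (one move), or halt and exit; it cannot wait at a site. At each time the agent observes only the identifiers of the carriers present at its current site. An exploration algorithm is a deterministic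 rule mapping the agent's a priori knowledge and history of observations to its next action. An algorithm solves PVG-Exploration of $\vec G_R$ if from every injection site the agent visits every site of $S$ and halts after finitely many moves. $\vec G_R$ is feasible if from the starting point of every carrier there exists a walk realizable by the agent (riding carriers and switching between carriers at the same site at the same time) visiting all sites. *)

theory Defs
  imports Main
begin

definition pos :: "(nat \<Rightarrow> nat list) \<Rightarrow> nat \<Rightarrow> nat \<Rightarrow> nat" where
  "pos \<pi> c t = \<pi> c ! (t mod length (\<pi> c))"

definition pv_system :: "nat set \<Rightarrow> nat set \<Rightarrow> (nat \<Rightarrow> nat list) \<Rightarrow> bool" where
  "pv_system S C \<pi> \<longleftrightarrow> finite S \<and> finite C \<and> C \<noteq> {} \<and> card C \<le> card S \<and>
     (\<forall>c\<in>C. \<pi> c \<noteq> [] \<and> set (\<pi> c) \<subseteq> S)"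

definition period :: "nat set \<Rightarrow> (nat \<Rightarrow> nat list) \<Rightarrow> nat" where
  "period C \<pi> = Max ((\<lambda>c. length (\<pi> c)) ` C)"

definition homogeneous :: "nat set \<Rightarrow> (nat \<Rightarrow> nat list) \<Rightarrow> bool" where
  "homogeneous C \<pi> \<longleftrightarrow> (\<forall>c\<in>C. \<forall>d\<in>C. length (\<pi> c) = length (\<pi> d))"

definition start :: "nat set \<Rightarrow> (nat \<Rightarrow> nat list) \<Rightarrow> nat set" where
  "start C \<pi> = (\<lambda>c. pos \<pi> c 0) ` C"

definition realizable_walk :: "nat set \<Rightarrow> (nat \<Rightarrow> nat list) \<Rightarrow> (nat \<Rightarrow> nat) \<Rightarrow> nat \<Rightarrow> bool" where
  "realizable_walk C \<pi> w m \<longleftrightarrow>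
     (\<forall>t<m. \<exists>c\<in>C. pos \<pi> c t = w t \<and> pos \<pi> c (Suc t) = w (Suc t))"

definition feasible :: "nat set \<Rightarrow> nat set \<Rightarrow> (nat \<Rightarrow> nat list) \<Rightarrow> bool" where
  "feasible S C \<pi> \<longleftrightarrow> (\<forall>x\<in>start C \<pi>. \<exists>w m. w 0 = x \<and> realizable_walk C \<pi> w m \<and> S \<subseteq> w ` {..m})"

definition obs :: "nat set \<Rightarrow> (nat \<Rightarrow> nat list) \<Rightarrow> nat \<Rightarrow> nat \<Rightarrow> nat set" where
  "obs C \<pi> x t = {c\<in>C. pos \<pi> c t = x}"

datatype act = Halt | Ride nat

text \<open>An exploration algorithm maps the history of observations (times 0..t) to an action.
The agent's a priori knowledge (B, homogeneity) is encoded by the algorithm being chosen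
depending only on it.\<close>
type_synonym algorithm = "nat set list \<Rightarrow> act"

fun run :: "algorithm \<Rightarrow> nat set \<Rightarrow> (nat \<Rightarrow> nat list) \<Rightarrow> nat \<Rightarrow> nat \<Rightarrow> nat \<times> nat set list" where
  "run alg C \<pi> x0 0 = (x0, [obs C \<pi> x0 0])"
| "run alg C \<pi> x0 (Suc t) =
     (let (x, h) = run alg C \<pi> x0 t in
      case alg h of
        Halt \<Rightarrow> (x, h)
      | Ride c \<Rightarrow> (let y = pos \<pi> c (Suc t) in (y, h @ [obs C \<pi> y (Suc t)])))"

definition explores_in :: "algorithm \<Rightarrow> nat set \<Rightarrow> nat set \<Rightarrow> (nat \<Rightarrow> nat list) \<Rightarrow> nat \<Rightarrow> nat \<Rightarrow> bool" where
  "explores_in alg S C \<pi> x0 m \<longleftrightarrow>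
     (\<forall>t<m. \<exists>c. alg (snd (run alg C \<pi> x0 t)) = Ride c \<and>
                 c \<in> obs C \<pi> (fst (run alg C \<pi> x0 t)) t) \<and>
     alg (snd (run alg C \<pi> x0 m)) = Halt \<and>
     S \<subseteq> (\<lambda>t. fst (run alg C \<pi> x0 t)) ` {..m}"

definition solves_within :: "algorithm \<Rightarrow> nat set \<Rightarrow> nat set \<Rightarrow> (nat \<Rightarrow> nat list) \<Rightarrow> nat \<Rightarrow> bool" where
  "solves_within alg S C \<pi> bound \<longleftrightarrow>
     (\<forall>x0\<in>start C \<pi>. \<exists>m\<le>bound. explores_in alg S C \<pi> x0 m)"

end

theory Submission
  imports Defs
begin

(* The explorer performs a depth-first search over the carriers, organised in
   phases of W consecutive time steps, where W bounds a common period of any two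
   carriers (W = B^2 in general since lcm(p(c),p(d)) <= p(c) p(d), and W = B for
   homogeneous systems).  Within one window of W steps, two carriers that ever
   meet do meet, and every carrier visits its whole route.  Hence one phase
   suffices to (i) explore the current carrier c: ride it and record every
   carrier seen, which is exactly the set of carriers meeting c; (ii) go down to
   an unexplored neighbour d: ride c until d is met and switch; (iii) go back up
   to the parent carrier in the same way.  Every carrier is explored once,
   entered once and left once, except the initial one, which gives 3k-2 phases.
   When the search stops, the explored carriers contain the initial one and are
   closed under meeting; feasibility then forces them to cover all sites. *)

subsection \<open>Periodicity of carriers\<close>

lemma residue_in_window:
  assumes q: "0 < (q::nat)"
  shows "\<exists>t. t0 \<le> t \<and> t < t0 + q \<and> t mod q = r mod q"
proof -
  define k where "k = t0 div q"
  have t0: "t0 = k * q + t0 mod q" unfolding k_def by simp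
  have lt: "t0 mod q < q" "r mod q < q" using q by auto
  show ?thesis
  proof (cases "t0 mod q \<le> r mod q")
    case True
    have "(r mod q + k * q) mod q = r mod q" by simp
    moreover have "t0 \<le> r mod q + k * q" "r mod q + k * q < t0 + q" using True lt t0 by linarith+
    ultimately show ?thesis by blast
  next
    case False
    have "(r mod q + (k + 1) * q) mod q = r mod q" by (simp only: mod_mult_self1) simp
    moreover have "(k + 1) * q = k * q + q" by simp
    then have "t0 \<le> r mod q + (k + 1) * q" "r mod q + (k + 1) * q < t0 + q"
      using False lt t0 by linarith+
    ultimately show ?thesis by blast
  qed
qed

lemma pos_periodic: "length (\<pi> c) dvd q \<Longrightarrow> t mod q = t' mod q \<Longrightarrow> pos \<pi> c t = pos \<pi> c t'"
  by (metis mod_mod_cancel pos_def)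

definition common_period_bound :: "nat set \<Rightarrow> (nat \<Rightarrow> nat list) \<Rightarrow> nat \<Rightarrow> bool" where
  "common_period_bound C \<pi> W \<longleftrightarrow>
     (\<forall>c\<in>C. \<forall>d\<in>C. \<exists>q>0. q \<le> W \<and> length (\<pi> c) dvd q \<and> length (\<pi> d) dvd q)"

definition meets :: "nat set \<Rightarrow> (nat \<Rightarrow> nat list) \<Rightarrow> nat \<Rightarrow> nat set" where
  "meets C \<pi> c = {d\<in>C. \<exists>t. pos \<pi> c t = pos \<pi> d t}"

(* A positive common period is a multiple of the route length, so routes are nonempty. *)
lemma route_nonempty:
  assumes "common_period_bound C \<pi> W" "c \<in> C"
  shows "\<pi> c \<noteq> []"
  using assms unfolding common_period_bound_def by fastforce

lemma pos_in_route: "\<pi> c \<noteq> [] \<Longrightarrow> pos \<pi> c t \<in> set (\<pi> c)"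
  by (simp add: pos_def)

lemma meeting_in_window:
  assumes W: "common_period_bound C \<pi> W" and cd: "c \<in> C" "d \<in> meets C \<pi> c"
  shows "\<exists>i<W. pos \<pi> c (t0 + i) = pos \<pi> d (t0 + i)"
proof -
  obtain t1 where d: "d \<in> C" "pos \<pi> c t1 = pos \<pi> d t1" using cd(2) unfolding meets_def by auto
  obtain q where q: "q > 0" "q \<le> W" "length (\<pi> c) dvd q" "length (\<pi> d) dvd q"
    using W cd(1) d(1) unfolding common_period_bound_def by blast
  obtain t where t: "t0 \<le> t" "t < t0 + q" "t mod q = t1 mod q" using residue_in_window[OF q(1)] by blast
  have "pos \<pi> c t = pos \<pi> d t" using pos_periodic[of \<pi> c q t t1] pos_periodic[of \<pi> d q t t1] q t(3) d(2) by simp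
  then show ?thesis using t q by (intro exI[of _ "t - t0"]) auto
qed

lemma route_in_window:
  assumes W: "common_period_bound C \<pi> W" and c: "c \<in> C" and y: "y \<in> set (\<pi> c)"
  shows "\<exists>i<W. pos \<pi> c (t0 + i) = y"
proof -
  obtain r where r: "r < length (\<pi> c)" "\<pi> c ! r = y" using y by (auto simp: in_set_conv_nth)
  obtain q where q: "q > 0" "q \<le> W" "length (\<pi> c) dvd q"
    using W c unfolding common_period_bound_def by blast
  have len: "0 < length (\<pi> c)" "length (\<pi> c) \<le> W" using r(1) q dvd_imp_le by (auto intro: le_trans)
  obtain t where t: "t0 \<le> t" "t < t0 + length (\<pi> c)" "t mod length (\<pi> c) = r mod length (\<pi> c)"
    using residue_in_window[OF len(1)] by blast
  have "pos \<pi> c t = y" using t(3) r by (simp add: pos_def)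
  then show ?thesis using t len by (intro exI[of _ "t - t0"]) auto
qed

lemma route_length_bounds:
  assumes "pv_system S C \<pi>" "c \<in> C"
  shows "0 < length (\<pi> c)" "length (\<pi> c) \<le> period C \<pi>"
  using assms unfolding period_def pv_system_def by (auto intro: Max_ge)

(* In general the product of two periods is a common period, whence W = B^2. *)
lemma common_period_bound_square:
  assumes sys: "pv_system S C \<pi>" and B: "period C \<pi> \<le> B"
  shows "common_period_bound C \<pi> (B ^ 2)"
  unfolding common_period_bound_def
proof (intro ballI)
  fix c d assume cd: "c \<in> C" "d \<in> C"
  have "length (\<pi> c) * length (\<pi> d) \<le> B * B"
    using route_length_bounds[OF sys cd(1)] route_length_bounds[OF sys cd(2)] B
    by (intro mult_le_mono) auto
  moreover have "0 < length (\<pi> c) * length (\<pi> d)"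
    using route_length_bounds(1)[OF sys cd(1)] route_length_bounds(1)[OF sys cd(2)] by simp
  ultimately show "\<exists>q>0. q \<le> B ^ 2 \<and> length (\<pi> c) dvd q \<and> length (\<pi> d) dvd q"
    by (intro exI[of _ "length (\<pi> c) * length (\<pi> d)"]) (simp add: power2_eq_square)
qed

lemma common_period_bound_homogeneous:
  assumes sys: "pv_system S C \<pi>" and hom: "homogeneous C \<pi>" and B: "period C \<pi> \<le> B"
  shows "common_period_bound C \<pi> B"
  unfolding common_period_bound_def
proof (intro ballI)
  fix c d assume cd: "c \<in> C" "d \<in> C"
  have "length (\<pi> d) = length (\<pi> c)" using hom cd unfolding homogeneous_def by blast
  then show "\<exists>q>0. q \<le> B \<and> length (\<pi> c) dvd q \<and> length (\<pi> d) dvd q"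
    using route_length_bounds[OF sys cd(1)] B by (intro exI[of _ "length (\<pi> c)"]) simp
qed

subsection \<open>Carrier sets closed under meeting\<close>

lemma closed_carriers_carry_walk:
  assumes walk: "realizable_walk C \<pi> w m" and c0: "c0 \<in> E" "pos \<pi> c0 0 = w 0"
    and closed: "\<forall>c\<in>E. meets C \<pi> c \<subseteq> E" and t: "t < m"
  shows "\<exists>c\<in>E. pos \<pi> c t = w t \<and> pos \<pi> c (Suc t) = w (Suc t)"
  using t
proof (induction t)
  case 0
  then obtain c where c: "c \<in> C" "pos \<pi> c 0 = w 0" "pos \<pi> c (Suc 0) = w (Suc 0)"
    using walk unfolding realizable_walk_def by blast
  then have "pos \<pi> c0 0 = pos \<pi> c 0" using c0(2) by simp
  then have "c \<in> meets C \<pi> c0" using c(1) unfolding meets_def by blast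
  then show ?case using closed c0(1) c by blast
next
  case (Suc t)
  then obtain c where c: "c \<in> E" "pos \<pi> c (Suc t) = w (Suc t)" by auto
  obtain c' where c': "c' \<in> C" "pos \<pi> c' (Suc t) = w (Suc t)" "pos \<pi> c' (Suc (Suc t)) = w (Suc (Suc t))"
    using walk Suc.prems unfolding realizable_walk_def by blast
  then have "pos \<pi> c (Suc t) = pos \<pi> c' (Suc t)" using c(2) by simp
  then have "c' \<in> meets C \<pi> c" using c'(1) unfolding meets_def by blast
  then show ?case using closed c c' by blast
qed

lemma closed_carriers_cover_walk:
  assumes walk: "realizable_walk C \<pi> w m" and c0: "c0 \<in> E" "pos \<pi> c0 0 = w 0"
    and closed: "\<forall>c\<in>E. meets C \<pi> c \<subseteq> E" and routes: "\<forall>c\<in>E. \<pi> c \<noteq> []"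
  shows "w ` {..m} \<subseteq> insert (w 0) (\<Union>c\<in>E. set (\<pi> c))"
proof
  fix y assume "y \<in> w ` {..m}"
  then obtain t where t: "t \<le> m" "y = w t" by auto
  show "y \<in> insert (w 0) (\<Union>c\<in>E. set (\<pi> c))"
  proof (cases t)
    case 0 then show ?thesis using t by simp
  next
    case (Suc t')
    then obtain c where "c \<in> E" "pos \<pi> c (Suc t') = y"
      using closed_carriers_carry_walk[OF walk c0 closed, of t'] t by auto
    then show ?thesis using routes pos_in_route by blast
  qed
qed

subsection \<open>The depth-first explorer\<close>

(* The search state is the mode, the
   DFS stack of (carrier, its recorded neighbours) with the current carrier on
   top, and the set of carriers explored so far. *)
datatype mode = Explore | Down nat | Up | Done

type_synonym dfs_state = "mode \<times> (nat \<times> nat set) list \<times> nat set"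

definition decide :: "(nat \<times> nat set) list \<Rightarrow> nat set \<Rightarrow> dfs_state" where
  "decide stk E =
    (if snd (hd stk) - E \<noteq> {} then (Down (LEAST d. d \<in> snd (hd stk) - E), stk, E)
     else if 2 \<le> length stk then (Up, stk, E) else (Done, stk, E))"

fun advance :: "nat \<Rightarrow> (nat \<Rightarrow> nat set) \<Rightarrow> nat \<Rightarrow> dfs_state \<Rightarrow> dfs_state" where
  "advance W f j (Explore, stk, E) =
     decide ((fst (hd stk), (\<Union>i<W. f (j * W + i))) # tl stk) (insert (fst (hd stk)) E)"
| "advance W f j (Down d, stk, E) = (Explore, (d, {}) # stk, E)"
| "advance W f j (Up, stk, E) = decide (tl stk) E"
| "advance W f j (Done, stk, E) = (Done, stk, E)"

fun phase_state :: "nat \<Rightarrow> (nat \<Rightarrow> nat set) \<Rightarrow> nat \<Rightarrow> dfs_state" where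
  "phase_state W f 0 = (Explore, [(LEAST c. c \<in> f 0, {})], {})"
| "phase_state W f (Suc j) = advance W f j (phase_state W f j)"

(* The carrier the agent rides at the start of a phase, and the one it wants to
   be on at its end. *)
definition current :: "dfs_state \<Rightarrow> nat" where
  "current s = fst (hd (fst (snd s)))"

definition target :: "dfs_state \<Rightarrow> nat" where
  "target s = (case fst s of Down d \<Rightarrow> d | Up \<Rightarrow> fst (hd (tl (fst (snd s)))) | _ \<Rightarrow> current s)"

definition dfs_explorer :: "nat \<Rightarrow> algorithm" where
  "dfs_explorer W h = (let t = length h - 1; s = phase_state W (\<lambda>i. h ! i) (t div W) in
     if fst s = Done then Halt else Ride (if target s \<in> h ! t then target s else current s))"

lemma phase_state_cong: "\<forall>i\<le>j * W. f i = g i \<Longrightarrow> phase_state W f j = phase_state W g j"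
proof (induction j)
  case 0 then show ?case by simp
next
  case (Suc j)
  have "\<forall>i\<le>j * W. f i = g i" using Suc.prems by (auto intro: order_trans)
  then have same: "phase_state W f j = phase_state W g j" using Suc.IH by blast
  have "(\<Union>i<W. f (j * W + i)) = (\<Union>i<W. g (j * W + i))" using Suc.prems by auto
  then have "advance W f j (mo, stk, E) = advance W g j (mo, stk, E)" for mo stk E
    by (cases mo) auto
  then have "advance W f j s = advance W g j s" for s by (cases s) auto
  then show ?case using same by simp
qed

definition parent_chain :: "(nat \<times> nat set) list \<Rightarrow> bool" where
  "parent_chain stk \<longleftrightarrow> (\<forall>i. Suc i < length stk \<longrightarrow> fst (stk ! i) \<in> snd (stk ! Suc i))"

locale dfs_run =
  fixes W :: nat and C :: "nat set" and \<pi> :: "nat \<Rightarrow> nat list" and x0 :: nat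
  assumes W_pos: "1 \<le> W" and finC: "finite C"
    and bound: "common_period_bound C \<pi> W" and x0: "x0 \<in> start C \<pi>"
begin

definition site :: "nat \<Rightarrow> nat" where "site t = fst (run (dfs_explorer W) C \<pi> x0 t)"
definition hist :: "nat \<Rightarrow> nat set list" where "hist t = snd (run (dfs_explorer W) C \<pi> x0 t)"
definition seen :: "nat \<Rightarrow> nat set" where "seen t = obs C \<pi> (site t) t"
definition state :: "nat \<Rightarrow> dfs_state" where "state j = phase_state W seen j"
definition root :: nat where "root = (LEAST c. c \<in> seen 0)"

lemma seen_iff: "c \<in> seen t \<longleftrightarrow> c \<in> C \<and> pos \<pi> c t = site t"
  by (simp add: seen_def obs_def)

lemma site_0: "site 0 = x0" by (simp add: site_def)

lemma root: "root \<in> C" "pos \<pi> root 0 = x0"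
proof -
  obtain c where "c \<in> C" "pos \<pi> c 0 = x0" using x0 by (auto simp: start_def)
  then have "c \<in> seen 0" using seen_iff site_0 by auto
  then have "root \<in> seen 0" unfolding root_def by (rule LeastI)
  then show "root \<in> C" "pos \<pi> root 0 = x0" using seen_iff site_0 by auto
qed

lemma state_0: "state 0 = (Explore, [(root, {})], {})"
  by (simp add: state_def root_def)

lemma state_Suc: "state (Suc j) = advance W seen j (state j)"
  by (simp add: state_def)

lemma ride_step:
  assumes "dfs_explorer W (hist t) = Ride c"
  shows "site (Suc t) = pos \<pi> c (Suc t)" "hist (Suc t) = hist t @ [seen (Suc t)]"
proof -
  have r: "run (dfs_explorer W) C \<pi> x0 t = (site t, hist t)"
    unfolding site_def hist_def by simp
  have "run (dfs_explorer W) C \<pi> x0 (Suc t) =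
          (pos \<pi> c (Suc t), hist t @ [obs C \<pi> (pos \<pi> c (Suc t)) (Suc t)])"
    using r assms by (simp add: Let_def)
  then show "site (Suc t) = pos \<pi> c (Suc t)" "hist (Suc t) = hist t @ [seen (Suc t)]"
    unfolding seen_def site_def[of "Suc t"] hist_def[of "Suc t"] by simp_all
qed

lemma hist_eq: "\<forall>t'<t. dfs_explorer W (hist t') \<noteq> Halt \<Longrightarrow> hist t = map seen [0..<Suc t]"
proof (induction t)
  case 0 then show ?case by (simp add: hist_def seen_def site_0)
next
  case (Suc t)
  obtain c where c: "dfs_explorer W (hist t) = Ride c"
    using Suc.prems by (cases "dfs_explorer W (hist t)") auto
  then show ?case using Suc ride_step(2)[OF c] by simp
qed

lemma decision:
  assumes "\<forall>t'<t. dfs_explorer W (hist t') \<noteq> Halt"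
  defines "s \<equiv> state (t div W)"
  shows "dfs_explorer W (hist t) =
           (if fst s = Done then Halt else Ride (if target s \<in> seen t then target s else current s))"
proof -
  have h: "hist t = map seen [0..<Suc t]" using hist_eq assms by auto
  have "\<forall>i\<le>t div W * W. hist t ! i = seen i"
  proof (intro allI impI)
    fix i assume "i \<le> t div W * W"
    then have "i < Suc t" using div_times_less_eq_dividend le_imp_less_Suc order.trans by metis
    then show "hist t ! i = seen i" using h by (simp del: upt_Suc)
  qed
  then have "phase_state W (\<lambda>i. hist t ! i) (t div W) = s"
    unfolding s_def state_def by (rule phase_state_cong)
  moreover have "hist t ! t = seen t" "length (hist t) - 1 = t" using h by (simp_all del: upt_Suc)
  ultimately show ?thesis unfolding dfs_explorer_def Let_def by simp
qed

lemma no_halt_before: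
  "\<forall>j'<J. fst (state j') \<noteq> Done \<Longrightarrow> t < J * W \<Longrightarrow> dfs_explorer W (hist t) \<noteq> Halt"
proof (induction t rule: less_induct)
  case (less t)
  then have "\<forall>t'<t. dfs_explorer W (hist t') \<noteq> Halt" by auto
  moreover have "t div W < J" using less.prems(2) by (simp add: less_mult_imp_div_less)
  ultimately show ?case using decision less.prems(1) by simp
qed

lemma ride_phase:
  assumes run: "\<forall>j'\<le>j. fst (state j') \<noteq> Done" and cd: "current (state j) \<in> C" "target (state j) \<in> C"
    and start: "site (j * W) = pos \<pi> (current (state j)) (j * W)"
  defines "c \<equiv> current (state j)" and "d \<equiv> target (state j)"
  shows "i \<le> W \<Longrightarrow> site (j * W + i) = pos \<pi> d (j * W + i) \<or>
     (site (j * W + i) = pos \<pi> c (j * W + i) \<and> (\<forall>i'<i. pos \<pi> c (j * W + i') \<noteq> pos \<pi> d (j * W + i')))"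
proof (induction i)
  case 0 then show ?case using start c_def by simp
next
  case (Suc i)
  define t where "t = j * W + i"
  have iW: "i < W" using Suc by simp
  have "\<forall>t'<t. dfs_explorer W (hist t') \<noteq> Halt"
    using no_halt_before[of "Suc j"] run iW unfolding t_def by (auto simp: less_Suc_eq_le)
  moreover have "t div W = j" using iW W_pos unfolding t_def by simp
  ultimately have move: "dfs_explorer W (hist t) = Ride (if d \<in> seen t then d else c)"
    using decision run unfolding c_def d_def by simp
  have IH: "site t = pos \<pi> d t \<or> (site t = pos \<pi> c t \<and> (\<forall>i'<i. pos \<pi> c (j * W + i') \<noteq> pos \<pi> d (j * W + i')))"
    using Suc iW unfolding t_def by simp
  show ?case
  proof (cases "d \<in> seen t")
    case True
    then show ?thesis using ride_step(1)[OF move] unfolding t_def by simp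
  next
    case False
    then have "pos \<pi> d t \<noteq> site t" using cd seen_iff unfolding d_def by auto
    then show ?thesis using IH ride_step(1)[OF move] False unfolding t_def by (auto simp: less_Suc_eq)
  qed
qed

lemma legal_move:
  assumes run: "\<forall>j'\<le>j. fst (state j') \<noteq> Done" and cd: "current (state j) \<in> C" "target (state j) \<in> C"
    and start: "site (j * W) = pos \<pi> (current (state j)) (j * W)" and iW: "i < W"
  shows "\<exists>c. dfs_explorer W (hist (j * W + i)) = Ride c \<and> c \<in> seen (j * W + i)"
proof -
  define t where "t = j * W + i"
  have "\<forall>t'<t. dfs_explorer W (hist t') \<noteq> Halt"
    using no_halt_before[of "Suc j"] run iW unfolding t_def by (auto simp: less_Suc_eq_le)
  moreover have "t div W = j" using iW W_pos unfolding t_def by simp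
  ultimately have move: "dfs_explorer W (hist t) =
      Ride (if target (state j) \<in> seen t then target (state j) else current (state j))"
    using decision run by simp
  have "site t = pos \<pi> (target (state j)) t \<or> site t = pos \<pi> (current (state j)) t"
    using ride_phase[OF run cd start, of i] iW unfolding t_def by auto
  then show ?thesis using move cd seen_iff unfolding t_def[symmetric] by auto
qed

lemma phase_stay:
  assumes "\<forall>j'\<le>j. fst (state j') \<noteq> Done" "current (state j) \<in> C" "target (state j) = current (state j)"
    "site (j * W) = pos \<pi> (current (state j)) (j * W)" "i \<le> W"
  shows "site (j * W + i) = pos \<pi> (current (state j)) (j * W + i)"
  using ride_phase[OF assms(1,2) _ assms(4,5)] assms(2,3) by auto

lemma phase_switch:
  assumes "\<forall>j'\<le>j. fst (state j') \<noteq> Done" "current (state j) \<in> C" "target (state j) \<in> C"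
    "site (j * W) = pos \<pi> (current (state j)) (j * W)"
    "\<exists>i<W. pos \<pi> (current (state j)) (j * W + i) = pos \<pi> (target (state j)) (j * W + i)"
  shows "site (Suc j * W) = pos \<pi> (target (state j)) (Suc j * W)"
  using ride_phase[OF assms(1-4), of W] assms(5) by (auto simp: add.commute)

subsection \<open>The invariant of the depth-first search\<close>

definition stack_ok :: "nat \<Rightarrow> bool \<Rightarrow> (nat \<times> nat set) list \<Rightarrow> nat set \<Rightarrow> bool" where
  "stack_ok j b stk E \<longleftrightarrow> stk \<noteq> [] \<and> fst (last stk) = root \<and> finite E \<and> E \<subseteq> C \<and>
     fst ` set stk \<subseteq> C \<and> parent_chain stk \<and>
     (\<forall>i<length stk. (0 < i \<or> b) \<longrightarrow> fst (stk ! i) \<in> E \<and> snd (stk ! i) = meets C \<pi> (fst (stk ! i))) \<and>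
     (\<forall>c\<in>E. c \<notin> fst ` set stk \<longrightarrow> meets C \<pi> c \<subseteq> E) \<and>
     site (j * W) = pos \<pi> (fst (hd stk)) (j * W) \<and>
     (\<forall>c\<in>E. set (\<pi> c) \<subseteq> site ` {..j * W})"

(* The full invariant adds mode-specific facts and the phase count: each explored
   carrier accounts for three phases (explore, enter, leave), minus the ones
   not yet spent on the carriers still on the stack. *)
definition dfs_inv :: "nat \<Rightarrow> dfs_state \<Rightarrow> bool" where
  "dfs_inv j s \<longleftrightarrow> (case s of (mo, stk, E) \<Rightarrow> stack_ok j (mo \<noteq> Explore) stk E \<and>
     (case mo of
        Explore \<Rightarrow> fst (hd stk) \<notin> E \<and> j + length stk = 3 * card E + 1
      | Down d \<Rightarrow> d \<in> snd (hd stk) \<and> d \<notin> E \<and> d \<in> C \<and> j + length stk + 1 = 3 * card E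
      | Up \<Rightarrow> 2 \<le> length stk \<and> snd (hd stk) \<subseteq> E \<and> j + length stk + 1 = 3 * card E
      | Done \<Rightarrow> length stk = 1 \<and> snd (hd stk) \<subseteq> E \<and> j + length stk + 1 = 3 * card E))"

lemma dfs_inv_0: "dfs_inv 0 (state 0)"
  using root site_0 by (simp add: state_0 dfs_inv_def stack_ok_def parent_chain_def)

lemma decide_inv:
  assumes ok: "stack_ok j True stk E" and count: "j + length stk + 1 = 3 * card E"
  shows "dfs_inv j (decide stk E)"
proof -
  have ne: "stk \<noteq> []" using ok by (simp add: stack_ok_def)
  then have "snd (hd stk) = meets C \<pi> (fst (hd stk))" using ok by (simp add: stack_ok_def hd_conv_nth)
  then have nbC: "snd (hd stk) \<subseteq> C" by (auto simp: meets_def)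
  show ?thesis
  proof (cases "snd (hd stk) - E \<noteq> {}")
    case True
    define d where "d = (LEAST d. d \<in> snd (hd stk) - E)"
    have d: "d \<in> snd (hd stk) - E" unfolding d_def using True by (metis LeastI_ex ex_in_conv)
    have "decide stk E = (Down d, stk, E)" using True by (simp add: decide_def d_def)
    then show ?thesis using ok count d nbC by (auto simp: dfs_inv_def)
  next
    case False
    moreover have "\<not> 2 \<le> length stk \<Longrightarrow> length stk = 1" using ne by (cases stk) (auto simp: Suc_le_eq)
    ultimately show ?thesis using ok count by (auto simp: decide_def dfs_inv_def)
  qed
qed

lemma inv_phase_start:
  assumes "dfs_inv j s" "fst s \<noteq> Done"
  shows "current s \<in> C" "target s \<in> C" "site (j * W) = pos \<pi> (current s) (j * W)"
proof -
  obtain mo stk E where s: "s = (mo, stk, E)" by (cases s) auto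
  have ok: "stack_ok j (mo \<noteq> Explore) stk E" using assms s by (simp add: dfs_inv_def)
  then have ne: "stk \<noteq> []" and sC: "fst ` set stk \<subseteq> C" by (auto simp: stack_ok_def)
  then show cC: "current s \<in> C" by (auto simp: s current_def)
  show "site (j * W) = pos \<pi> (current s) (j * W)" using ok by (simp add: s current_def stack_ok_def)
  show "target s \<in> C"
  proof (cases mo)
    case Up
    then have "2 \<le> length stk" using assms s by (simp add: dfs_inv_def)
    then have "hd (tl stk) \<in> set stk" by (cases stk; cases "tl stk") auto
    then show ?thesis using Up sC by (auto simp: s target_def)
  qed (use assms s cC in \<open>auto simp: dfs_inv_def target_def current_def\<close>)
qed

lemma routes_stay_visited:
  assumes "stack_ok j b stk E"
  shows "\<forall>c\<in>E. set (\<pi> c) \<subseteq> site ` {..Suc j * W}"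
proof -
  have "site ` {..j * W} \<subseteq> site ` {..Suc j * W}" by (intro image_mono) auto
  moreover have "\<forall>c\<in>E. set (\<pi> c) \<subseteq> site ` {..j * W}" using assms by (simp add: stack_ok_def)
  ultimately show ?thesis by blast
qed

lemma explore_phase:
  assumes run: "\<forall>j'\<le>j. fst (state j') \<noteq> Done" and inv: "dfs_inv j (state j)"
    and mode: "fst (state j) = Explore"
  defines "c \<equiv> current (state j)"
  shows "(\<Union>i<W. seen (j * W + i)) = meets C \<pi> c"
    and "site (Suc j * W) = pos \<pi> c (Suc j * W)"
    and "set (\<pi> c) \<subseteq> site ` {..Suc j * W}"
proof -
  have cC: "c \<in> C" and start: "site (j * W) = pos \<pi> c (j * W)"
    using inv_phase_start[OF inv] mode unfolding c_def by auto
  have "target (state j) = c" using mode unfolding c_def target_def by simp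
  then have on_c: "site (j * W + i) = pos \<pi> c (j * W + i)" if "i \<le> W" for i
    using phase_stay[OF run] cC start that unfolding c_def by simp
  show "(\<Union>i<W. seen (j * W + i)) = meets C \<pi> c"
  proof
    show "(\<Union>i<W. seen (j * W + i)) \<subseteq> meets C \<pi> c"
    proof
      fix d assume "d \<in> (\<Union>i<W. seen (j * W + i))"
      then obtain i where "i < W" "d \<in> seen (j * W + i)" by auto
      then have "d \<in> C" "pos \<pi> c (j * W + i) = pos \<pi> d (j * W + i)" using on_c[of i] seen_iff by auto
      then show "d \<in> meets C \<pi> c" unfolding meets_def by blast
    qed
    show "meets C \<pi> c \<subseteq> (\<Union>i<W. seen (j * W + i))"
    proof
      fix d assume d: "d \<in> meets C \<pi> c"
      obtain i where i: "i < W" "pos \<pi> c (j * W + i) = pos \<pi> d (j * W + i)"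
        using meeting_in_window[OF bound cC d] by blast
      then have "d \<in> seen (j * W + i)" using on_c[of i] d seen_iff unfolding meets_def by auto
      then show "d \<in> (\<Union>i<W. seen (j * W + i))" using i by blast
    qed
  qed
  show "site (Suc j * W) = pos \<pi> c (Suc j * W)" using on_c[of W] by (simp add: add.commute)
  show "set (\<pi> c) \<subseteq> site ` {..Suc j * W}"
  proof
    fix y assume "y \<in> set (\<pi> c)"
    then obtain i where "i < W" "pos \<pi> c (j * W + i) = y" using route_in_window[OF bound cC] by blast
    then show "y \<in> site ` {..Suc j * W}" using on_c[of i] by (intro image_eqI[of _ _ "j * W + i"]) auto
  qed
qed

lemma explore_step:
  assumes run: "\<forall>j'\<le>j. fst (state j') \<noteq> Done" and inv: "dfs_inv j (state j)"
    and s: "state j = (Explore, stk, E)"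
  shows "dfs_inv (Suc j) (state (Suc j))"
proof -
  define c where "c = fst (hd stk)"
  define stk' where "stk' = (c, meets C \<pi> c) # tl stk"
  define E' where "E' = insert c E"
  have ok: "stack_ok j False stk E" and cE: "c \<notin> E" and count: "j + length stk = 3 * card E + 1"
    using inv s by (simp_all add: dfs_inv_def c_def)
  have ne: "stk \<noteq> []" and fE: "finite E" and chain: "parent_chain stk"
    and entries: "\<forall>i<length stk. 0 < i \<longrightarrow> fst (stk ! i) \<in> E \<and> snd (stk ! i) = meets C \<pi> (fst (stk ! i))"
    using ok by (auto simp: stack_ok_def)
  have cur: "current (state j) = c" by (simp add: s current_def c_def)
  have explored: "(\<Union>i<W. seen (j * W + i)) = meets C \<pi> c"
      "site (Suc j * W) = pos \<pi> c (Suc j * W)" "set (\<pi> c) \<subseteq> site ` {..Suc j * W}"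
    using explore_phase[OF run inv] cur s by simp_all
  have cC: "c \<in> C" using inv_phase_start(1)[OF inv] s cur by simp
  have fst_stk': "map fst stk' = map fst stk" using ne unfolding stk'_def c_def by (cases stk) auto
  have tail: "0 < i \<Longrightarrow> stk' ! i = stk ! i" for i using ne unfolding stk'_def by (cases stk) (auto simp: nth_Cons')
  have len: "length stk' = length stk" using ne unfolding stk'_def by simp
  have "stack_ok (Suc j) True stk' E'"
    unfolding stack_ok_def
  proof (intro conjI)
    have sites: "fst ` set stk' = fst ` set stk" by (metis fst_stk' set_map)
    have c_on: "c \<in> fst ` set stk" using ne unfolding c_def by simp
    show "stk' \<noteq> []" "finite E'" using fE unfolding stk'_def E'_def by simp_all
    show "E' \<subseteq> C" "fst ` set stk' \<subseteq> C" using ok cC sites unfolding stack_ok_def E'_def by simp_all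
    show "\<forall>c'\<in>E'. c' \<notin> fst ` set stk' \<longrightarrow> meets C \<pi> c' \<subseteq> E'"
      using ok sites c_on unfolding stack_ok_def E'_def by auto
    show "site (Suc j * W) = pos \<pi> (fst (hd stk')) (Suc j * W)" using explored(2) by (simp add: stk'_def)
    show "fst (last stk') = root" using ok ne fst_stk' unfolding stack_ok_def by (metis last_map list.map_disc_iff)
    show "parent_chain stk'" using chain fst_stk' len tail unfolding parent_chain_def
      by (metis Suc_lessD nth_map zero_less_Suc)
    show "\<forall>i<length stk'. (0 < i \<or> True) \<longrightarrow> fst (stk' ! i) \<in> E' \<and> snd (stk' ! i) = meets C \<pi> (fst (stk' ! i))"
      using entries tail len unfolding E'_def by (auto simp: stk'_def nth_Cons' split: if_splits)
    show "\<forall>c'\<in>E'. set (\<pi> c') \<subseteq> site ` {..Suc j * W}"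
      using routes_stay_visited[OF ok] explored(3) unfolding E'_def by blast
  qed
  moreover have "Suc j + length stk' + 1 = 3 * card E'" using count cE fE len unfolding E'_def by simp
  ultimately have "dfs_inv (Suc j) (decide stk' E')" by (rule decide_inv)
  moreover have "state (Suc j) = decide stk' E'"
    using state_Suc s explored unfolding stk'_def E'_def c_def by simp
  ultimately show ?thesis by simp
qed

lemma down_step:
  assumes run: "\<forall>j'\<le>j. fst (state j') \<noteq> Done" and inv: "dfs_inv j (state j)"
    and s: "state j = (Down d, stk, E)"
  shows "dfs_inv (Suc j) (state (Suc j))"
proof -
  define c where "c = fst (hd stk)"
  have ok: "stack_ok j True stk E" and d: "d \<in> snd (hd stk)" "d \<notin> E" "d \<in> C"
    and count: "j + length stk + 1 = 3 * card E"
    using inv s by (auto simp: dfs_inv_def)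
  have ne: "stk \<noteq> []" using ok by (simp add: stack_ok_def)
  have "snd (hd stk) = meets C \<pi> c" using ok ne unfolding c_def stack_ok_def by (simp add: hd_conv_nth)
  moreover have cur: "current (state j) = c" "target (state j) = d"
    by (simp_all add: s current_def target_def c_def)
  moreover have cC: "c \<in> C" using inv_phase_start(1)[OF inv] s cur by simp
  ultimately obtain i where "i < W" "pos \<pi> c (j * W + i) = pos \<pi> d (j * W + i)"
    using meeting_in_window[OF bound cC] d by blast
  then have on_d: "site (Suc j * W) = pos \<pi> d (Suc j * W)"
    using phase_switch[OF run] inv_phase_start[OF inv] s cur by auto
  define stk' where "stk' = (d, {}) # stk"
  have "stack_ok (Suc j) False stk' E"
    unfolding stack_ok_def
  proof (intro conjI)
    show "parent_chain stk'" unfolding parent_chain_def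
    proof (intro allI impI)
      fix i assume i: "Suc i < length stk'"
      show "fst (stk' ! i) \<in> snd (stk' ! Suc i)"
      proof (cases i)
        case 0 then show ?thesis using d ne by (simp add: stk'_def hd_conv_nth)
      next
        case (Suc i')
        have "parent_chain stk" using ok by (simp add: stack_ok_def)
        then show ?thesis using i Suc unfolding parent_chain_def stk'_def by simp
      qed
    qed
    show "\<forall>c'\<in>E. set (\<pi> c') \<subseteq> site ` {..Suc j * W}"
      using routes_stay_visited[OF ok] by blast
  qed (use ok d on_d in \<open>auto simp: stack_ok_def stk'_def nth_Cons'\<close>)
  moreover have "state (Suc j) = (Explore, stk', E)" using state_Suc s unfolding stk'_def by simp
  ultimately show ?thesis using d count unfolding stk'_def by (simp add: dfs_inv_def)
qed

(* Up phase: the explored top carrier is left; the agent returns to its parent,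
   which it meets because the child was recorded as one of its neighbours. *)
lemma up_step:
  assumes run: "\<forall>j'\<le>j. fst (state j') \<noteq> Done" and inv: "dfs_inv j (state j)"
    and s: "state j = (Up, stk, E)"
  shows "dfs_inv (Suc j) (state (Suc j))"
proof -
  have ok: "stack_ok j True stk E" and two: "2 \<le> length stk" and nb: "snd (hd stk) \<subseteq> E"
    and count: "j + length stk + 1 = 3 * card E"
    using inv s by (auto simp: dfs_inv_def)
  obtain a b rest where stk: "stk = a # b # rest" using two
    by (metis One_nat_def Suc_1 Suc_le_length_iff)
  have a: "fst a \<in> E" "snd a = meets C \<pi> (fst a)" and b: "snd b = meets C \<pi> (fst b)"
    and ab: "fst a \<in> snd b" and C: "fst a \<in> C" "fst b \<in> C"
    using ok stk unfolding stack_ok_def parent_chain_def by (auto dest: spec[of _ 0] spec[of _ 1])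
  have cur: "current (state j) = fst a" "target (state j) = fst b"
    by (simp_all add: s stk current_def target_def)
  have "fst b \<in> meets C \<pi> (fst a)" using ab b C unfolding meets_def by (auto simp: eq_commute)
  then obtain i where "i < W" "pos \<pi> (fst a) (j * W + i) = pos \<pi> (fst b) (j * W + i)"
    using meeting_in_window[OF bound C(1)] by blast
  then have on_b: "site (Suc j * W) = pos \<pi> (fst b) (Suc j * W)"
    using phase_switch[OF run] inv_phase_start[OF inv] s cur by auto
  have "stack_ok (Suc j) True (b # rest) E"
    unfolding stack_ok_def
  proof (intro conjI)
    show "parent_chain (b # rest)" using ok stk unfolding stack_ok_def parent_chain_def
      by (metis Suc_less_eq length_Cons nth_Cons_Suc)
    show "\<forall>i<length (b # rest). (0 < i \<or> True) \<longrightarrow>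
            fst ((b # rest) ! i) \<in> E \<and> snd ((b # rest) ! i) = meets C \<pi> (fst ((b # rest) ! i))"
      using ok stk unfolding stack_ok_def by (metis Suc_less_eq length_Cons nth_Cons_Suc zero_less_Suc)
    show "\<forall>c'\<in>E. set (\<pi> c') \<subseteq> site ` {..Suc j * W}"
      using routes_stay_visited[OF ok] by blast
  qed (use ok stk nb a on_b in \<open>auto simp: stack_ok_def\<close>)
  moreover have "Suc j + length (b # rest) + 1 = 3 * card E" using count stk by simp
  ultimately have "dfs_inv (Suc j) (decide (b # rest) E)" by (rule decide_inv)
  moreover have "state (Suc j) = decide (b # rest) E" using state_Suc s stk by simp
  ultimately show ?thesis by simp
qed

lemma dfs_inv_all: "\<forall>j'<j. fst (state j') \<noteq> Done \<Longrightarrow> dfs_inv j (state j)"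
proof (induction j)
  case 0 then show ?case using dfs_inv_0 by simp
next
  case (Suc j)
  have run: "\<forall>j'\<le>j. fst (state j') \<noteq> Done" using Suc.prems by (simp add: less_Suc_eq_le)
  have inv: "dfs_inv j (state j)" using Suc by simp
  obtain mo stk E where s: "state j = (mo, stk, E)" by (cases "state j") auto
  show ?case
  proof (cases mo)
    case Explore then show ?thesis using explore_step[OF run inv] s by simp
  next
    case (Down d) then show ?thesis using down_step[OF run inv] s by simp
  next
    case Up then show ?thesis using up_step[OF run inv] s by simp
  next
    case Done then show ?thesis using run s by auto
  qed
qed

subsection \<open>Termination and correctness\<close>

lemma dfs_inv_phase_bound: "dfs_inv j s \<Longrightarrow> j \<le> 3 * card C"
proof -
  assume inv: "dfs_inv j s"
  obtain mo stk E where s: "s = (mo, stk, E)" by (cases s) auto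
  have "stk \<noteq> []" "E \<subseteq> C" using inv s by (auto simp: dfs_inv_def stack_ok_def)
  moreover have "j + length stk \<le> 3 * card E + 1" using inv s by (cases mo) (simp_all add: dfs_inv_def)
  moreover have "card E \<le> card C" using card_mono[OF finC] calculation(2) .
  ultimately show ?thesis by (cases stk) auto
qed

lemma search_stops: "\<exists>j. fst (state j) = Done"
proof (rule ccontr)
  assume "\<nexists>j. fst (state j) = Done"
  then have "dfs_inv (Suc (3 * card C)) (state (Suc (3 * card C)))" using dfs_inv_all by auto
  then show False using dfs_inv_phase_bound by fastforce
qed

definition stop :: nat where "stop = (LEAST j. fst (state j) = Done)"

lemma stop: "fst (state stop) = Done" "\<forall>j<stop. fst (state j) \<noteq> Done"
  unfolding stop_def using LeastI_ex[OF search_stops] not_less_Least by auto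

lemma stop_explored:
  obtains E where "root \<in> E" "E \<subseteq> C" "\<forall>c\<in>E. meets C \<pi> c \<subseteq> E"
    "\<forall>c\<in>E. set (\<pi> c) \<subseteq> site ` {..stop * W}" "stop + 2 = 3 * card E"
proof -
  obtain stk E where s: "state stop = (Done, stk, E)" using stop(1) by (cases "state stop") auto
  have inv: "dfs_inv stop (state stop)" using dfs_inv_all stop(2) by simp
  then have ok: "stack_ok stop True stk E" and one: "length stk = 1" and nb: "snd (hd stk) \<subseteq> E"
    and count: "stop + length stk + 1 = 3 * card E"
    using s by (auto simp: dfs_inv_def)
  obtain a where a: "stk = [a]" using one by (cases stk) auto
  have root: "fst a = root" "fst a \<in> E" "snd a = meets C \<pi> (fst a)" using ok a by (auto simp: stack_ok_def)
  have "\<forall>c\<in>E. meets C \<pi> c \<subseteq> E"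
  proof
    fix c assume "c \<in> E"
    show "meets C \<pi> c \<subseteq> E"
    proof (cases "c = fst a")
      case True then show ?thesis using root nb a by simp
    next
      case False then show ?thesis using ok a \<open>c \<in> E\<close> by (auto simp: stack_ok_def)
    qed
  qed
  then show ?thesis using that root ok count a by (auto simp: stack_ok_def)
qed

lemma stop_bound: "stop \<le> 3 * card C - 2"
proof -
  obtain E where "E \<subseteq> C" "stop + 2 = 3 * card E" using stop_explored by metis
  moreover have "card E \<le> card C" using card_mono[OF finC] calculation(1) .
  ultimately show ?thesis by linarith
qed

lemma moves_legal: "t < stop * W \<Longrightarrow> \<exists>c. dfs_explorer W (hist t) = Ride c \<and> c \<in> seen t"
proof -
  assume t: "t < stop * W"
  define j where "j = t div W"
  have run: "\<forall>j'\<le>j. fst (state j') \<noteq> Done"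
    using stop(2) t unfolding j_def by (auto dest: less_mult_imp_div_less intro: le_less_trans)
  then have inv: "dfs_inv j (state j)" using dfs_inv_all by auto
  have "fst (state j) \<noteq> Done" using run by simp
  note start = inv_phase_start[OF inv this]
  have "t = j * W + t mod W" "t mod W < W" using W_pos unfolding j_def by simp_all
  then show ?thesis using legal_move[OF run start, of "t mod W"] by metis
qed

lemma halts: "dfs_explorer W (hist (stop * W)) = Halt"
proof -
  have "\<forall>t'<stop * W. dfs_explorer W (hist t') \<noteq> Halt" using no_halt_before stop(2) by blast
  moreover have "stop * W div W = stop" using W_pos by simp
  ultimately show ?thesis using decision stop(1) by simp
qed

lemma explores:
  assumes fea: "feasible S C \<pi>"
  shows "explores_in (dfs_explorer W) S C \<pi> x0 (stop * W)"
proof -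
  obtain E where E: "root \<in> E" "E \<subseteq> C" "\<forall>c\<in>E. meets C \<pi> c \<subseteq> E"
    "\<forall>c\<in>E. set (\<pi> c) \<subseteq> site ` {..stop * W}" using stop_explored by metis
  obtain w m where w: "w 0 = x0" "realizable_walk C \<pi> w m" "S \<subseteq> w ` {..m}"
    using fea x0 unfolding feasible_def by blast
  have "\<forall>c\<in>E. \<pi> c \<noteq> []" using E(2) route_nonempty[OF bound] by blast
  then have "S \<subseteq> insert x0 (\<Union>c\<in>E. set (\<pi> c))"
    using closed_carriers_cover_walk[OF w(2) E(1) _ E(3)] root(2) w by fastforce
  also have "\<dots> \<subseteq> site ` {..stop * W}" using E(4) site_0 by force
  finally show ?thesis
    using moves_legal halts unfolding explores_in_def seen_def site_def hist_def by simp
qed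

end

theorem dfs_explorer_solves:
  assumes "1 \<le> W" "pv_system S C \<pi>" "feasible S C \<pi>" "common_period_bound C \<pi> W"
  shows "solves_within (dfs_explorer W) S C \<pi> ((3 * card C - 2) * W)"
  unfolding solves_within_def
proof
  fix x0 assume "x0 \<in> start C \<pi>"
  then interpret dfs_run W C \<pi> x0 using assms by unfold_locales (auto simp: pv_system_def)
  show "\<exists>m\<le>(3 * card C - 2) * W. explores_in (dfs_explorer W) S C \<pi> x0 m"
    using explores[OF assms(3)] stop_bound by (intro exI[of _ "stop * W"]) auto
qed

theorem mainTheorem9:
  shows "(\<forall>B::nat. B \<ge> 1 \<longrightarrow> (\<exists>alg::algorithm. \<forall>S C \<pi>.
            pv_system S C \<pi> \<and> feasible S C \<pi> \<and> period C \<pi> \<le> B \<longrightarrow>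
            solves_within alg S C \<pi> ((3 * card C - 2) * B ^ 2)))
       \<and> (\<forall>B::nat. B \<ge> 1 \<longrightarrow> (\<exists>alg::algorithm. \<forall>S C \<pi>.
            pv_system S C \<pi> \<and> homogeneous C \<pi> \<and> feasible S C \<pi> \<and> period C \<pi> \<le> B \<longrightarrow>
            solves_within alg S C \<pi> ((3 * card C - 2) * B)))"
proof (intro conjI allI impI)
  fix B :: nat assume "B \<ge> 1"
  then have "1 \<le> B ^ 2" by simp
  then show "\<exists>alg. \<forall>S C \<pi>. pv_system S C \<pi> \<and> feasible S C \<pi> \<and> period C \<pi> \<le> B \<longrightarrow>
      solves_within alg S C \<pi> ((3 * card C - 2) * B ^ 2)"
    using dfs_explorer_solves common_period_bound_square by blast
next
  fix B :: nat assume "B \<ge> 1"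
  then show "\<exists>alg. \<forall>S C \<pi>. pv_system S C \<pi> \<and> homogeneous C \<pi> \<and> feasible S C \<pi> \<and> period C \<pi> \<le> B \<longrightarrow>
      solves_within alg S C \<pi> ((3 * card C - 2) * B)"
    using dfs_explorer_solves common_period_bound_homogeneous by blast
qed

end
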